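(* Let $x\in\{0,1\}^\infty$ have randomness rate $\tau>0$, let $0<\sigma<\tau$, let $0<\sigma'<\tau-\sigma$, and let $b=\lceil (1-\sigma)/\sigma'\rceil$. Let $a$ be a sufficiently large positive integer, and define $t_0=0$, $t_1=a$, and $t_i=b(t_1+\cdots+t_{i-1})$ for $i\ge2$. Put $x_i=x(t_{i-1}+1:t_i)$, $n_i=|x_i|=t_i-t_{i-1}$, and $\bar{x}_i=x_1x_2\cdots x_i=x(1:t_i)$ for $i\ge1$. Then: (1) $K(x_i\mid\bar{x}_{i-1})>\sigma n_i$ for all $i\ge2$; (2) $\log|x_i|=\Theta(i)$ and $\log|\bar{x}_i|=\Theta(i)$ as $i\to\infty$.
   Context: $x(n_1:n_2)$ denotes bits $n_1$ through $n_2$ of $x$ (indexed from 1); juxtaposition is concatenation. $K(u)$ and $K(u\mid v)$ denote plain and conditional plain Kolmogorov complexity with respect to fixed universal machines. A sequence $x$ has randomness rate $\tau$ if $K(x(1:n))\ge\tau n$ for all but finitely many $n$. "Sufficiently large" means: there is $a_0$ (depending on $x,\tau,\sigma,\sigma'$) such that the conclusion holds for every $a\ge a_0$. *)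

theory Defs
  imports Complex_Main "HOL-Library.Nat_Bijection" "HOL-Library.Landau_Symbols"
begin

datatype instr = Inc nat nat | Dec nat nat nat

fun cm_step :: "instr list \<Rightarrow> nat \<times> (nat \<Rightarrow> nat) \<Rightarrow> nat \<times> (nat \<Rightarrow> nat)" where
  "cm_step P (pc, R) =
     (if pc < length P then
        (case P ! pc of
           Inc r j \<Rightarrow> (j, R(r := Suc (R r)))
         | Dec r j k \<Rightarrow> (if R r = 0 then (k, R) else (j, R(r := R r - 1))))
      else (pc, R))"

definition cm_computes :: "instr list \<Rightarrow> (nat \<Rightarrow> nat option) \<Rightarrow> bool" where
  "cm_computes P f \<longleftrightarrow>
     (\<forall>x y. f x = Some y \<longleftrightarrow>
        (\<exists>n. fst ((cm_step P ^^ n) (0, (\<lambda>_. 0)(0 := x))) \<ge> length P \<and>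
             snd ((cm_step P ^^ n) (0, (\<lambda>_. 0)(0 := x))) 0 = y))"

definition partial_computable :: "(nat \<Rightarrow> nat option) \<Rightarrow> bool" where
  "partial_computable f \<longleftrightarrow> (\<exists>P. cm_computes P f)"

text \<open>Bijective encoding of binary strings as natural numbers.\<close>
fun bin_enc :: "bool list \<Rightarrow> nat" where
  "bin_enc [] = 0"
| "bin_enc (b # bs) = (if b then 2 else 1) + 2 * bin_enc bs"

definition computable_machine :: "(bool list \<Rightarrow> bool list option) \<Rightarrow> bool" where
  "computable_machine D \<longleftrightarrow>
     (\<exists>f. partial_computable f \<and> (\<forall>p. map_option bin_enc (D p) = f (bin_enc p)))"

definition computable_cond_machine :: "(bool list \<Rightarrow> bool list \<Rightarrow> bool list option) \<Rightarrow> bool" where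
  "computable_cond_machine D \<longleftrightarrow>
     (\<exists>f. partial_computable f \<and>
          (\<forall>p v. map_option bin_enc (D p v) = f (prod_encode (bin_enc p, bin_enc v))))"

definition optimal_machine :: "(bool list \<Rightarrow> bool list option) \<Rightarrow> bool" where
  "optimal_machine U \<longleftrightarrow> computable_machine U \<and>
     (\<forall>D. computable_machine D \<longrightarrow>
        (\<exists>c. \<forall>p u. D p = Some u \<longrightarrow> (\<exists>q. U q = Some u \<and> length q \<le> length p + c)))"

definition optimal_cond_machine :: "(bool list \<Rightarrow> bool list \<Rightarrow> bool list option) \<Rightarrow> bool" where
  "optimal_cond_machine U \<longleftrightarrow> computable_cond_machine U \<and>
     (\<forall>D. computable_cond_machine D \<longrightarrow>
        (\<exists>c. \<forall>p v u. D p v = Some u \<longrightarrow> (\<exists>q. U q v = Some u \<and> length q \<le> length p + c)))"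

definition KC :: "(bool list \<Rightarrow> bool list option) \<Rightarrow> bool list \<Rightarrow> nat" where
  "KC U u = (LEAST n. \<exists>p. length p = n \<and> U p = Some u)"

definition KC_cond :: "(bool list \<Rightarrow> bool list \<Rightarrow> bool list option) \<Rightarrow> bool list \<Rightarrow> bool list \<Rightarrow> nat" where
  "KC_cond U u v = (LEAST n. \<exists>p. length p = n \<and> U p v = Some u)"

text \<open>x(n1:n2): bits n1 through n2 of x, indexed from 1 (x 0 is ignored).\<close>
definition seg :: "(nat \<Rightarrow> bool) \<Rightarrow> nat \<Rightarrow> nat \<Rightarrow> bool list" where
  "seg x n1 n2 = map x [n1..<Suc n2]"

definition randomness_rate :: "(bool list \<Rightarrow> bool list option) \<Rightarrow> (nat \<Rightarrow> bool) \<Rightarrow> real \<Rightarrow> bool" where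
  "randomness_rate U x \<tau> \<longleftrightarrow> (\<forall>\<^sub>F n in sequentially. real (KC U (seg x 1 n)) \<ge> \<tau> * real n)"

function tb :: "nat \<Rightarrow> nat \<Rightarrow> nat \<Rightarrow> nat" where
  "tb a b 0 = 0"
| "tb a b (Suc 0) = a"
| "tb a b (Suc (Suc n)) = b * (\<Sum>j\<in>{1..Suc n}. tb a b j)"
  by pat_completeness auto
termination by (relation "Wellfounded.measure (\<lambda>(a, b, i). i)") auto

end

theory Submission
  imports Defs
begin

text \<open>Optimality of \<open>U\<close> turns every explicit machine into an upper bound on \<open>K\<close>. A machine
  that reads a self-delimiting header for \<open>|w|\<close> of about \<open>|w|/k\<close> bits, then \<open>w\<close>, then a
  \<open>V\<close>-program for \<open>v\<close> given \<open>w\<close>, and prints \<open>w v\<close>, shows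
  \<open>K(w v) \<le> (1 + 1/k) |w| + K(v | w) + O(1)\<close>. Taking \<open>w = x(1:t(i-1))\<close>, \<open>v = x\<^sub>i\<close>, the randomness
  rate gives \<open>\<tau> t(i) \<le> (1 + 1/k) t(i-1) + K(x\<^sub>i | w) + O(1)\<close>; since \<open>t(i) \<ge> b t(i-1)\<close> and
  \<open>b \<sigma>' \<ge> 1 - \<sigma>\<close>, choosing \<open>1/k\<close> small against \<open>\<tau> - \<sigma> - \<sigma>'\<close> and then \<open>a\<close> large forces
  \<open>K(x\<^sub>i | w) > \<sigma> n\<^sub>i\<close>.
  The boundaries are \<open>t(i) = b (b + 1)\<^sup>i\<^sup>-\<^sup>2 a\<close> for \<open>i \<ge> 2\<close>, which gives the logarithmic growth.\<close>

definition exec :: "instr list \<Rightarrow> nat \<Rightarrow> nat \<times> (nat \<Rightarrow> nat) \<Rightarrow> nat \<times> (nat \<Rightarrow> nat)" where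
  "exec P n s = (cm_step P ^^ n) s"

definition halts_with :: "instr list \<Rightarrow> (nat \<Rightarrow> nat) \<Rightarrow> (nat \<Rightarrow> nat) \<Rightarrow> bool" where
  "halts_with P R R' \<longleftrightarrow> (\<exists>n. fst (exec P n (0, R)) \<ge> length P \<and> snd (exec P n (0, R)) = R')"

fun reloc_instr :: "nat \<Rightarrow> nat \<Rightarrow> nat \<Rightarrow> instr \<Rightarrow> instr" where
  "reloc_instr off ex L (Inc r j) = Inc r (if j < L then j + off else ex)"
| "reloc_instr off ex L (Dec r j k) = Dec r (if j < L then j + off else ex) (if k < L then k + off else ex)"

definition reloc :: "nat \<Rightarrow> nat \<Rightarrow> instr list \<Rightarrow> instr list" where
  "reloc off ex Q = map (reloc_instr off ex (length Q)) Q"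

definition embedded :: "instr list \<Rightarrow> nat \<Rightarrow> nat \<Rightarrow> instr list \<Rightarrow> bool" where
  "embedded B off ex Q \<longleftrightarrow> off + length Q \<le> length B \<and>
     (\<forall>k<length Q. B ! (off + k) = reloc_instr off ex (length Q) (Q ! k)) \<and> (Q = [] \<longrightarrow> off = ex)"

lemma exec_0[simp]: "exec P 0 s = s" by (simp add: exec_def)
lemma exec_Suc: "exec P (Suc n) s = cm_step P (exec P n s)" by (simp add: exec_def)
lemma exec_add: "exec P (m + n) s = exec P m (exec P n s)" by (simp add: exec_def funpow_add)
lemma exec_Suc': "exec P (Suc n) s = exec P n (cm_step P s)"
  by (simp only: exec_def funpow_Suc_right o_apply)

lemma step_halted: "fst s \<ge> length P \<Longrightarrow> cm_step P s = s"
  by (cases s) simp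

lemma exec_halted_stable: "fst (exec P n s) \<ge> length P \<Longrightarrow> exec P (d + n) s = exec P n s"
  by (induction d) (simp_all add: exec_Suc step_halted)

lemma exec_halted_unique: "fst (exec P n s) \<ge> length P \<Longrightarrow> fst (exec P m s) \<ge> length P \<Longrightarrow> exec P n s = exec P m s"
proof -
  assume a: "fst (exec P n s) \<ge> length P" and b: "fst (exec P m s) \<ge> length P"
  have "exec P (m - n + n) s = exec P n s" "exec P (n - m + m) s = exec P m s"
    using exec_halted_stable[OF a] exec_halted_stable[OF b] by blast+
  then show ?thesis by (cases "n \<le> m") auto
qed

definition reloc_state :: "nat \<Rightarrow> nat \<Rightarrow> nat \<Rightarrow> nat \<times> (nat \<Rightarrow> nat) \<Rightarrow> nat \<times> (nat \<Rightarrow> nat)" where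
  "reloc_state off ex L s = (if fst s < L then off + fst s else ex, snd s)"

lemma step_embedded:
  assumes "embedded B off ex Q" "pc < length Q"
  shows "cm_step B (off + pc, R) = reloc_state off ex (length Q) (cm_step Q (pc, R))"
proof -
  have b: "B ! (off + pc) = reloc_instr off ex (length Q) (Q ! pc)" "off + pc < length B"
    using assms unfolding embedded_def by auto
  show ?thesis using b assms(2)
    by (cases "Q ! pc") (auto simp: reloc_state_def add.commute)
qed

lemma exec_embedded:
  assumes "embedded B off ex Q" "Q \<noteq> []"
  shows "(\<forall>m<n. fst (exec Q m (0, R)) < length Q) \<Longrightarrow>
         exec B n (off, R) = reloc_state off ex (length Q) (exec Q n (0, R))"
proof (induction n)
  case 0 then show ?case using assms(2) by (simp add: reloc_state_def)
next
  case (Suc n)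
  then have IH: "exec B n (off, R) = reloc_state off ex (length Q) (exec Q n (0, R))"
    and lt: "fst (exec Q n (0, R)) < length Q" by auto
  obtain pc R1 where e: "exec Q n (0, R) = (pc, R1)" by fastforce
  show ?case using IH lt e step_embedded[OF assms(1), of pc R1]
    by (simp add: exec_Suc reloc_state_def)
qed

lemma embedded_halts:
  assumes "embedded B off ex Q" "halts_with Q R R'"
  shows "\<exists>n. exec B n (off, R) = (ex, R')"
proof (cases "Q = []")
  case True
  have "exec [] n s = s" for n s by (induction n) (simp_all add: exec_Suc step_halted)
  then have "R' = R" using assms(2) True by (simp add: halts_with_def)
  then show ?thesis using True assms(1) unfolding embedded_def by (intro exI[of _ 0]) simp
next
  case False
  define P where "P n \<longleftrightarrow> fst (exec Q n (0, R)) \<ge> length Q" for n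
  obtain n where n: "P n" "snd (exec Q n (0, R)) = R'"
    using assms(2) unfolding halts_with_def P_def by auto
  define n0 where "n0 = (LEAST n. P n)"
  have p0: "P n0" using n(1) unfolding n0_def by (rule LeastI)
  have le: "n0 \<le> n" using n(1) unfolding n0_def by (rule Least_le)
  have lt: "\<forall>m<n0. fst (exec Q m (0, R)) < length Q"
    using not_less_Least[where P=P] unfolding n0_def P_def by (auto simp: not_le)
  have "exec Q n (0, R) = exec Q n0 (0, R)"
    using exec_halted_stable[of Q n0 "(0,R)" "n - n0"] p0 le unfolding P_def by simp
  then have "snd (exec Q n0 (0, R)) = R'" using n(2) by simp
  then show ?thesis using exec_embedded[OF assms(1) False lt] p0 unfolding P_def
    by (intro exI[of _ n0]) (simp add: reloc_state_def)
qed

section \<open>Structured programs\<close>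

definition seq :: "instr list \<Rightarrow> instr list \<Rightarrow> instr list" (infixr ";;" 60) where
  "seq P Q = reloc 0 (length P) P @ reloc (length P) (length P + length Q) Q"

definition ifz :: "nat \<Rightarrow> instr list \<Rightarrow> instr list \<Rightarrow> instr list" where
  "ifz r A B = [Dec r (Suc (length A)) 1] @ reloc 1 (Suc (length A + length B)) A
      @ reloc (Suc (length A)) (Suc (length A + length B)) B"

definition whl :: "nat \<Rightarrow> instr list \<Rightarrow> instr list" where
  "whl r body = [Dec r 1 (Suc (length body))] @ reloc 1 0 body"

lemma length_reloc[simp]: "length (reloc off ex Q) = length Q"
  by (simp add: reloc_def)
lemma length_seq[simp]: "length (P ;; Q) = length P + length Q"
  by (simp add: seq_def)
lemma length_ifz[simp]: "length (ifz r A B) = Suc (length A + length B)"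
  by (simp add: ifz_def)
lemma length_whl[simp]: "length (whl r B) = Suc (length B)"
  by (simp add: whl_def)

lemma embedded_appendI: "length A = off \<Longrightarrow> (Q = [] \<longrightarrow> off = ex) \<Longrightarrow> embedded (A @ reloc off ex Q @ C) off ex Q"
  unfolding embedded_def by (auto simp: reloc_def nth_append)

lemma halts_with_intro: "exec P n (0, R) = (length P, R') \<Longrightarrow> halts_with P R R'"
  unfolding halts_with_def by (intro exI[of _ n]) simp

lemma seq_halts:
  assumes "halts_with P R R1" "halts_with Q R1 R2"
  shows "halts_with (P ;; Q) R R2"
proof -
  have e1: "embedded (P ;; Q) 0 (length P) P"
    using embedded_appendI[of "[]" 0 P "length P" "reloc (length P) (length P + length Q) Q"]
    by (simp add: seq_def)
  have e2: "embedded (P ;; Q) (length P) (length P + length Q) Q"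
    using embedded_appendI[of "reloc 0 (length P) P" "length P" Q "length P + length Q" "[]"]
    by (simp add: seq_def)
  obtain n1 where n1: "exec (P;;Q) n1 (0, R) = (length P, R1)"
    using embedded_halts[OF e1 assms(1)] by auto
  obtain n2 where n2: "exec (P;;Q) n2 (length P, R1) = (length P + length Q, R2)"
    using embedded_halts[OF e2 assms(2)] by auto
  show ?thesis
    by (rule halts_with_intro[of _ "n2 + n1"]) (simp add: exec_add n1 n2)
qed

lemma ifz_zero_halts:
  assumes "R r = 0" "A \<noteq> []" "halts_with A R R'"
  shows "halts_with (ifz r A B) R R'"
proof -
  have e: "embedded (ifz r A B) 1 (Suc (length A + length B)) A"
    unfolding ifz_def using embedded_appendI[of "[Dec r (Suc (length A)) 1]" 1 A] assms(2) by simp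
  obtain n where n: "exec (ifz r A B) n (1, R) = (Suc (length A + length B), R')"
    using embedded_halts[OF e assms(3)] by auto
  have s: "cm_step (ifz r A B) (0, R) = (1, R)" using assms(1) by (simp add: ifz_def)
  show ?thesis by (rule halts_with_intro[of _ "Suc n"]) (simp only: exec_Suc' s n length_ifz)
qed

lemma ifz_nonzero_halts:
  assumes "R r \<noteq> 0" "B \<noteq> []" "halts_with B (R(r := R r - 1)) R'"
  shows "halts_with (ifz r A B) R R'"
proof -
  have e: "embedded (ifz r A B) (Suc (length A)) (Suc (length A + length B)) B"
    unfolding ifz_def using embedded_appendI[of "[Dec r (Suc (length A)) 1] @ reloc 1 (Suc (length A + length B)) A" "Suc (length A)" B _ "[]"] assms(2) by simp
  obtain n where n: "exec (ifz r A B) n (Suc (length A), R(r := R r - 1)) = (Suc (length A + length B), R')"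
    using embedded_halts[OF e assms(3)] by auto
  have s: "cm_step (ifz r A B) (0, R) = (Suc (length A), R(r := R r - 1))" using assms(1) by (simp add: ifz_def)
  show ?thesis by (rule halts_with_intro[of _ "Suc n"]) (simp only: exec_Suc' s n length_ifz)
qed

lemma whl_zero_halts: "R r = 0 \<Longrightarrow> halts_with (whl r B) R R"
  by (rule halts_with_intro[of _ 1]) (simp add: exec_Suc' whl_def)

lemma whl_step_halts:
  assumes body: "halts_with B (R(r := R r - 1)) R1" and loop: "halts_with (whl r B) R1 R2"
    and "R r \<noteq> 0" "B \<noteq> []"
  shows "halts_with (whl r B) R R2"
proof -
  have e: "embedded (whl r B) 1 0 B"
    unfolding whl_def using embedded_appendI[of "[Dec r 1 (Suc (length B))]" 1 B 0 "[]"] assms(4) by simp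
  obtain n where n: "exec (whl r B) n (1, R(r := R r - 1)) = (0, R1)"
    using embedded_halts[OF e body] by auto
  obtain m where m: "fst (exec (whl r B) m (0, R1)) \<ge> length (whl r B)" "snd (exec (whl r B) m (0, R1)) = R2"
    using loop unfolding halts_with_def by blast
  have e1: "exec (whl r B) 1 (0, R) = (1, R(r := R r - 1))" using assms(3) by (simp add: exec_def whl_def)
  have "exec (whl r B) (m + n + 1) (0, R) = exec (whl r B) m (0, R1)"
    by (simp only: exec_add e1 n)
  then show ?thesis unfolding halts_with_def using m by metis
qed

lemma inc_halts: "halts_with [Inc r 1] R (R(r := Suc (R r)))"
  by (rule halts_with_intro[of _ 1]) (simp add: exec_def)
lemma dec_halts: "halts_with [Dec r 1 1] R (R(r := R r - 1))"
  by (rule halts_with_intro[of _ 1]) (auto simp add: exec_def)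

lemma halts_with_eq: "halts_with P R R' \<Longrightarrow> R' = R'' \<Longrightarrow> halts_with P R R''" by simp

lemma seq_not_Nil_iff[simp]: "P ;; Q \<noteq> [] \<longleftrightarrow> P \<noteq> [] \<or> Q \<noteq> []"
  unfolding seq_def reloc_def by simp

definition move :: "nat \<Rightarrow> nat \<Rightarrow> instr list" where "move r s = whl r [Inc s 1]"
definition move2 :: "nat \<Rightarrow> nat \<Rightarrow> nat \<Rightarrow> instr list" where "move2 r s t = whl r ([Inc s 1] ;; [Inc t 1])"
definition double :: "nat \<Rightarrow> nat \<Rightarrow> instr list" where "double r s = whl r ([Inc s 1] ;; [Inc s 1])"
fun add_const :: "nat \<Rightarrow> nat \<Rightarrow> instr list" where
  "add_const 0 m = []"
| "add_const (Suc k) m = add_const k m ;; [Inc m 1]"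
definition halve :: "nat \<Rightarrow> nat \<Rightarrow> nat \<Rightarrow> instr list" where
  "halve N h od = whl N (ifz N [Inc od 1] [Inc h 1])"

lemma programs_not_Nil[simp]: "move r s \<noteq> []" "move2 r s t \<noteq> []" "double r s \<noteq> []" "halve N h od \<noteq> []"
  "whl r B \<noteq> []" "ifz r A B \<noteq> []"
  by (simp_all add: move_def move2_def double_def halve_def whl_def ifz_def)

lemma move_halts: "r \<noteq> s \<Longrightarrow> halts_with (move r s) R (R(r := 0, s := R s + R r))"
proof (induction "R r" arbitrary: R)
  case 0 then show ?case unfolding move_def by (intro halts_with_eq[OF whl_zero_halts]) auto
next
  case (Suc n)
  define R1 where "R1 = R(r := R r - 1, s := Suc (R s))"
  have a: "halts_with [Inc s 1] (R(r := R r - 1)) R1"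
    unfolding R1_def using Suc.prems by (intro halts_with_eq[OF inc_halts]) simp
  have b: "halts_with (move r s) R1 (R1(r := 0, s := R1 s + R1 r))"
    apply (rule Suc.hyps(1)) using Suc.hyps(2)[symmetric] Suc.prems unfolding R1_def by simp_all
  have c: "R1(r := 0, s := R1 s + R1 r) = R(r := 0, s := R s + R r)"
    unfolding R1_def using Suc.hyps(2)[symmetric] Suc.prems by (simp add: fun_eq_iff)
  show ?case unfolding move_def
    using whl_step_halts[OF a b[unfolded c move_def]] Suc.hyps(2)[symmetric] by simp
qed

lemma move2_halts: "r \<noteq> s \<Longrightarrow> r \<noteq> t \<Longrightarrow> s \<noteq> t \<Longrightarrow>
  halts_with (move2 r s t) R (R(r := 0, s := R s + R r, t := R t + R r))"
proof (induction "R r" arbitrary: R)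
  case 0 then show ?case unfolding move2_def by (intro halts_with_eq[OF whl_zero_halts]) auto
next
  case (Suc n)
  define R1 where "R1 = R(r := R r - 1, s := Suc (R s), t := Suc (R t))"
  have a: "halts_with ([Inc s 1] ;; [Inc t 1]) (R(r := R r - 1)) R1"
    unfolding R1_def using Suc.prems by (intro seq_halts[OF inc_halts halts_with_eq[OF inc_halts]]) (simp add: fun_eq_iff)
  have b: "halts_with (move2 r s t) R1 (R1(r := 0, s := R1 s + R1 r, t := R1 t + R1 r))"
    apply (rule Suc.hyps(1)) using Suc.hyps(2)[symmetric] Suc.prems unfolding R1_def by simp_all
  have c: "R1(r := 0, s := R1 s + R1 r, t := R1 t + R1 r) = R(r := 0, s := R s + R r, t := R t + R r)"
    unfolding R1_def using Suc.hyps(2)[symmetric] Suc.prems by (simp add: fun_eq_iff)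
  show ?case unfolding move2_def
    using whl_step_halts[OF a b[unfolded c move2_def]] Suc.hyps(2)[symmetric] by simp
qed

lemma double_halts: "r \<noteq> s \<Longrightarrow> halts_with (double r s) R (R(r := 0, s := R s + 2 * R r))"
proof (induction "R r" arbitrary: R)
  case 0 then show ?case unfolding double_def by (intro halts_with_eq[OF whl_zero_halts]) auto
next
  case (Suc n)
  define R1 where "R1 = R(r := R r - 1, s := Suc (Suc (R s)))"
  have a: "halts_with ([Inc s 1] ;; [Inc s 1]) (R(r := R r - 1)) R1"
    unfolding R1_def using Suc.prems by (intro seq_halts[OF inc_halts halts_with_eq[OF inc_halts]]) (simp add: fun_eq_iff)
  have b: "halts_with (double r s) R1 (R1(r := 0, s := R1 s + 2 * R1 r))"
    apply (rule Suc.hyps(1)) using Suc.hyps(2)[symmetric] Suc.prems unfolding R1_def by simp_all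
  have c: "R1(r := 0, s := R1 s + 2 * R1 r) = R(r := 0, s := R s + 2 * R r)"
    unfolding R1_def using Suc.hyps(2)[symmetric] Suc.prems by (simp add: fun_eq_iff)
  show ?case unfolding double_def
    using whl_step_halts[OF a b[unfolded c double_def]] Suc.hyps(2)[symmetric] by simp
qed

lemma add_const_halts: "halts_with (add_const k m) R (R(m := R m + k))"
proof (induction k arbitrary: R)
  case 0 then show ?case by (intro halts_with_eq[OF halts_with_intro[of _ 0]]) auto
next
  case (Suc k)
  show ?case by (simp only: add_const.simps, rule seq_halts[OF Suc.IH halts_with_eq[OF inc_halts]]) (simp add: fun_eq_iff)
qed

lemma halve_halts: "N \<noteq> h \<Longrightarrow> N \<noteq> od \<Longrightarrow> h \<noteq> od \<Longrightarrow>
  halts_with (halve N h od) R (R(N := 0, h := R h + R N div 2, od := R od + R N mod 2))"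
proof (induction "R N" arbitrary: R rule: less_induct)
  case less
  show ?case
  proof (cases "R N")
    case 0 then show ?thesis unfolding halve_def by (intro halts_with_eq[OF whl_zero_halts]) auto
  next
    case (Suc n)
    show ?thesis
    proof (cases n)
      case 0
      have a: "halts_with (ifz N [Inc od 1] [Inc h 1]) (R(N := R N - 1)) (R(N := 0, od := Suc (R od)))"
        using less.prems Suc 0 by (intro ifz_zero_halts halts_with_eq[OF inc_halts]) (simp_all add: fun_eq_iff)
      have b: "halts_with (halve N h od) (R(N := 0, od := Suc (R od))) (R(N := 0, h := R h + R N div 2, od := R od + R N mod 2))"
        unfolding halve_def using less.prems Suc 0 by (intro halts_with_eq[OF whl_zero_halts]) (simp_all add: fun_eq_iff)
      show ?thesis using whl_step_halts[OF a b[unfolded halve_def]] Suc unfolding halve_def by simp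
    next
      case (Suc m)
      have a: "halts_with (ifz N [Inc od 1] [Inc h 1]) (R(N := R N - 1)) (R(N := m, h := Suc (R h)))"
        using less.prems Suc \<open>R N = Suc n\<close> by (intro ifz_nonzero_halts halts_with_eq[OF inc_halts]) (simp_all add: fun_eq_iff)
      have b: "halts_with (halve N h od) (R(N := m, h := Suc (R h))) ((R(N := m, h := Suc (R h)))(N := 0, h := Suc (R h) + m div 2, od := R od + m mod 2))"
        using less.hyps[of "R(N := m, h := Suc (R h))"] less.prems Suc \<open>R N = Suc n\<close> by simp
      have c: "(R(N := m, h := Suc (R h)))(N := 0, h := Suc (R h) + m div 2, od := R od + m mod 2) = R(N := 0, h := R h + R N div 2, od := R od + R N mod 2)"
        using less.prems Suc \<open>R N = Suc n\<close> by (simp add: fun_eq_iff)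
      show ?thesis using whl_step_halts[OF a b[unfolded c halve_def]] \<open>R N = Suc n\<close> unfolding halve_def by simp
    qed
  qed
qed

definition copy_add :: "nat \<Rightarrow> nat \<Rightarrow> nat \<Rightarrow> instr list" where
  "copy_add e w t = move2 e w t ;; move t e"

lemma copy_add_ne[simp]: "copy_add e w t \<noteq> []" by (simp add: copy_add_def)

lemma copy_add_halts: "e \<noteq> w \<Longrightarrow> e \<noteq> t \<Longrightarrow> w \<noteq> t \<Longrightarrow> R t = 0 \<Longrightarrow>
  halts_with (copy_add e w t) R (R(w := R w + R e))"
  unfolding copy_add_def by (rule seq_halts[OF move2_halts halts_with_eq[OF move_halts]]) (auto simp: fun_eq_iff)

definition read_unary_one :: "nat \<Rightarrow> nat \<Rightarrow> instr list" where
  "read_unary_one k B = [Dec (B+4) 1 1] ;; move (B+4) B ;; add_const k (B+1) ;; [Inc (B+6) 1]"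
definition read_unary_body :: "nat \<Rightarrow> nat \<Rightarrow> instr list" where
  "read_unary_body k B = halve B (B+4) (B+5) ;; ifz (B+5) (read_unary_one k B) (move (B+4) B)"
definition read_unary :: "nat \<Rightarrow> nat \<Rightarrow> instr list" where
  "read_unary k B = [Inc (B+6) 1] ;; whl (B+6) (read_unary_body k B)"

lemma read_unary_one_ne[simp]: "read_unary_one k B \<noteq> []" by (simp add: read_unary_one_def)
lemma read_unary_body_ne[simp]: "read_unary_body k B \<noteq> []" by (simp add: read_unary_body_def)

lemma read_unary_loop_halts: "S (B+6) = 1 \<Longrightarrow> S (B+4) = 0 \<Longrightarrow> S (B+5) = 0 \<Longrightarrow>
  S B = bin_enc (replicate j True @ False # rest) \<Longrightarrow>
  halts_with (whl (B+6) (read_unary_body k B)) S (S(B := bin_enc rest, B+1 := S (B+1) + k * j, B+6 := 0))"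
proof (induction j arbitrary: S)
  case 0
  have h: "halts_with (halve B (B+4) (B+5)) (S(B+6 := S (B+6) - 1))
      ((S(B+6 := 0))(B := 0, B+4 := bin_enc rest, B+5 := 1))"
    by (rule halts_with_eq[OF halve_halts]) (use 0 in \<open>auto simp: fun_eq_iff\<close>)
  have i: "halts_with (ifz (B+5) (read_unary_one k B) (move (B+4) B)) ((S(B+6 := 0))(B := 0, B+4 := bin_enc rest, B+5 := 1))
        (S(B := bin_enc rest, B+1 := S (B+1) + k * 0, B+6 := 0))"
    using 0 by (intro ifz_nonzero_halts halts_with_eq[OF move_halts]) (auto simp: fun_eq_iff)
  have w: "halts_with (whl (B+6) (read_unary_body k B)) (S(B := bin_enc rest, B+1 := S (B+1) + k * 0, B+6 := 0))
        (S(B := bin_enc rest, B+1 := S (B+1) + k * 0, B+6 := 0))"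
    by (rule whl_zero_halts) simp
  show ?case by (rule halts_with_eq[OF whl_step_halts[OF seq_halts[OF h i, folded read_unary_body_def] w]]) (use 0 in \<open>auto simp: fun_eq_iff\<close>)
next
  case (Suc j)
  define X where "X = bin_enc (replicate j True @ False # rest)"
  have SB: "S B = 2 + 2 * X" using Suc.prems(4) by (simp add: X_def)
  have h: "halts_with (halve B (B+4) (B+5)) (S(B+6 := S (B+6) - 1))
      ((S(B+6 := 0))(B := 0, B+4 := Suc X, B+5 := 0))"
    by (rule halts_with_eq[OF halve_halts]) (use Suc.prems SB in \<open>auto simp: fun_eq_iff\<close>)
  have bt: "halts_with (read_unary_one k B) ((S(B+6 := 0))(B := 0, B+4 := Suc X, B+5 := 0))
        (S(B := X, B+1 := S (B+1) + k, B+6 := 1))"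
    unfolding read_unary_one_def using Suc.prems
    by (intro seq_halts[OF dec_halts seq_halts[OF move_halts seq_halts[OF add_const_halts halts_with_eq[OF inc_halts]]]]) (auto simp: fun_eq_iff)
  have i: "halts_with (ifz (B+5) (read_unary_one k B) (move (B+4) B)) ((S(B+6 := 0))(B := 0, B+4 := Suc X, B+5 := 0))
        (S(B := X, B+1 := S (B+1) + k, B+6 := 1))"
    by (rule ifz_zero_halts[OF _ _ bt]) simp_all
  have rest: "halts_with (whl (B+6) (read_unary_body k B)) (S(B := X, B+1 := S (B+1) + k, B+6 := 1))
       (S(B := bin_enc rest, B+1 := S (B+1) + k * Suc j, B+6 := 0))"
    by (rule halts_with_eq[OF Suc.IH[of "S(B := X, B+1 := S (B+1) + k, B+6 := 1)"]])
       (use Suc.prems in \<open>auto simp: fun_eq_iff X_def\<close>)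
  show ?case by (rule halts_with_eq[OF whl_step_halts[OF seq_halts[OF h i, folded read_unary_body_def] rest]]) (use Suc.prems in \<open>auto simp: fun_eq_iff\<close>)
qed

lemma read_unary_halts: "S (B+6) = 0 \<Longrightarrow> S (B+4) = 0 \<Longrightarrow> S (B+5) = 0 \<Longrightarrow>
  S B = bin_enc (replicate j True @ False # rest) \<Longrightarrow>
  halts_with (read_unary k B) S (S(B := bin_enc rest, B+1 := S (B+1) + k * j))"
  unfolding read_unary_def
  by (rule seq_halts[OF inc_halts halts_with_eq[OF read_unary_loop_halts]]) (auto simp: fun_eq_iff)

definition read_bits_one :: "nat \<Rightarrow> instr list" where
  "read_bits_one B = [Dec (B+4) 1 1] ;; move (B+4) B ;; copy_add (B+3) (B+2) (B+7) ;; copy_add (B+3) (B+2) (B+7)"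
definition read_bits_zero :: "nat \<Rightarrow> instr list" where
  "read_bits_zero B = move (B+4) B ;; copy_add (B+3) (B+2) (B+7)"
definition read_bits_body :: "nat \<Rightarrow> instr list" where
  "read_bits_body B = halve B (B+4) (B+5) ;; ifz (B+5) (read_bits_one B) (read_bits_zero B) ;; move (B+3) (B+7) ;; double (B+7) (B+3)"
definition read_bits :: "nat \<Rightarrow> instr list" where
  "read_bits B = whl (B+1) (read_bits_body B)"

lemma read_bits_not_Nil[simp]: "read_bits_one B \<noteq> []" "read_bits_zero B \<noteq> []" "read_bits_body B \<noteq> []"
  by (simp_all add: read_bits_one_def read_bits_zero_def read_bits_body_def)

lemma read_bits_halts: "S (B+1) = length u \<Longrightarrow> S B = bin_enc (u @ p) \<Longrightarrow> S (B+3) = 2 ^ K \<Longrightarrow>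
  S (B+4) = 0 \<Longrightarrow> S (B+5) = 0 \<Longrightarrow> S (B+7) = 0 \<Longrightarrow>
  halts_with (read_bits B) S (S(B := bin_enc p, B+1 := 0, B+2 := S (B+2) + 2^K * bin_enc u, B+3 := 2^(K + length u)))"
proof (induction u arbitrary: S K)
  case Nil then show ?case unfolding read_bits_def by (intro halts_with_eq[OF whl_zero_halts]) (auto simp: fun_eq_iff)
next
  case (Cons c u)
  define X where "X = bin_enc (u @ p)"
  define S1 where "S1 = S(B+1 := S (B+1) - 1)"
  have S1: "S1 (B+1) = length u" "S1 B = bin_enc ((c # u) @ p)" "S1 (B+3) = 2^K"
     "S1 (B+4) = 0" "S1 (B+5) = 0" "S1 (B+7) = 0" "S1 (B+2) = S (B+2)"
    using Cons.prems by (auto simp: S1_def)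
  define S3 where "S3 = S1(B := X, B+2 := S (B+2) + 2^K * (if c then 2 else 1))"
  define S4 where "S4 = S3(B+3 := 2^(Suc K))"
  have d: "halts_with (move (B+3) (B+7) ;; double (B+7) (B+3)) S3 S4"
    by (rule seq_halts[OF move_halts halts_with_eq[OF double_halts]]) (use S1 in \<open>auto simp: fun_eq_iff S3_def S4_def\<close>)
  have body: "halts_with (read_bits_body B) S1 S4"
  proof -
    have "halts_with (halve B (B+4) (B+5) ;; ifz (B+5) (read_bits_one B) (read_bits_zero B) ;; move (B+3) (B+7) ;; double (B+7) (B+3)) S1 S4"
    proof (cases c)
      case True
      have SB: "S1 B = 2 + 2 * X" using S1(2) True unfolding X_def by simp
      have h: "halts_with (halve B (B+4) (B+5)) S1 (S1(B := 0, B+4 := Suc X, B+5 := 0))"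
        by (rule halts_with_eq[OF halve_halts]) (use S1 SB True in \<open>auto simp: fun_eq_iff X_def\<close>)
      have t: "halts_with (read_bits_one B) (S1(B := 0, B+4 := Suc X, B+5 := 0)) S3"
        unfolding read_bits_one_def
        by (rule seq_halts[OF dec_halts seq_halts[OF move_halts seq_halts[OF copy_add_halts halts_with_eq[OF copy_add_halts]]]])
           (use S1 True in \<open>auto simp: fun_eq_iff S3_def\<close>)
      have i: "halts_with (ifz (B+5) (read_bits_one B) (read_bits_zero B)) (S1(B := 0, B+4 := Suc X, B+5 := 0)) S3"
        by (rule ifz_zero_halts[OF _ _ t]) simp_all
      show ?thesis by (rule seq_halts[OF h seq_halts[OF i d]])
    next
      case False
      have SB: "S1 B = 1 + 2 * X" using S1(2) False unfolding X_def by simp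
      have h: "halts_with (halve B (B+4) (B+5)) S1 (S1(B := 0, B+4 := X, B+5 := 1))"
        by (rule halts_with_eq[OF halve_halts]) (use S1 SB False in \<open>auto simp: fun_eq_iff X_def\<close>)
      have t: "halts_with (read_bits_zero B) (S1(B := 0, B+4 := X, B+5 := 0)) S3"
        unfolding read_bits_zero_def
        by (rule seq_halts[OF move_halts halts_with_eq[OF copy_add_halts]])
           (use S1 False in \<open>auto simp: fun_eq_iff S3_def\<close>)
      have i: "halts_with (ifz (B+5) (read_bits_one B) (read_bits_zero B)) (S1(B := 0, B+4 := X, B+5 := 1)) S3"
        by (rule ifz_nonzero_halts) (use t in \<open>simp_all add: fun_upd_twist\<close>)
      show ?thesis by (rule seq_halts[OF h seq_halts[OF i d]])
    qed
    then show ?thesis unfolding read_bits_body_def .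
  qed
  have rest: "halts_with (read_bits B) S4 (S(B := bin_enc p, B+1 := 0, B+2 := S (B+2) + 2^K * bin_enc (c # u), B+3 := 2^(K + length (c # u))))"
    by (rule halts_with_eq[OF Cons.IH[of S4 "Suc K"]])
       (use S1 in \<open>auto simp: fun_eq_iff S4_def S3_def S1_def X_def algebra_simps\<close>)
  show ?case unfolding read_bits_def
    by (rule whl_step_halts[OF body[unfolded S1_def] rest[unfolded read_bits_def]]) (use Cons.prems in auto)
qed

definition add_triangle :: "nat \<Rightarrow> instr list" where
  "add_triangle B = whl (B+8) (copy_add (B+8) (B+9) (B+7) ;; [Inc (B+9) 1])"

lemma add_triangle_halts: "S (B+7) = 0 \<Longrightarrow>
  halts_with (add_triangle B) S (S(B+8 := 0, B+9 := S (B+9) + triangle (S (B+8))))"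
proof (induction "S (B+8)" arbitrary: S)
  case 0 then show ?case unfolding add_triangle_def by (intro halts_with_eq[OF whl_zero_halts]) (auto simp: fun_eq_iff)
next
  case (Suc n)
  define S1 where "S1 = S(B+8 := S (B+8) - 1, B+9 := S (B+9) + n + 1)"
  have a: "halts_with (copy_add (B+8) (B+9) (B+7) ;; [Inc (B+9) 1]) (S(B+8 := S (B+8) - 1)) S1"
    by (rule seq_halts[OF copy_add_halts halts_with_eq[OF inc_halts]]) (use Suc.hyps(2)[symmetric] Suc.prems in \<open>auto simp: fun_eq_iff S1_def\<close>)
  have b: "halts_with (add_triangle B) S1 (S1(B+8 := 0, B+9 := S1 (B+9) + triangle (S1 (B+8))))"
    by (rule Suc.hyps(1)) (use Suc.hyps(2)[symmetric] Suc.prems in \<open>simp_all add: S1_def\<close>)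
  have c: "S1(B+8 := 0, B+9 := S1 (B+9) + triangle (S1 (B+8))) = S(B+8 := 0, B+9 := S (B+9) + triangle (S (B+8)))"
    using Suc.hyps(2)[symmetric] by (auto simp: fun_eq_iff S1_def)
  show ?case unfolding add_triangle_def
    by (rule whl_step_halts[OF a b[unfolded c add_triangle_def]]) (use Suc.hyps(2)[symmetric] in auto)
qed

definition mult_loop :: "nat \<Rightarrow> instr list" where
  "mult_loop B = whl 0 (copy_add (B+3) (B+10) (B+11))"

lemma mult_loop_halts: "0 < B \<Longrightarrow> S (B+11) = 0 \<Longrightarrow>
  halts_with (mult_loop B) S (S(0 := 0, B+10 := S (B+10) + S (B+3) * S 0))"
proof (induction "S 0" arbitrary: S)
  case 0 then show ?case unfolding mult_loop_def by (intro halts_with_eq[OF whl_zero_halts]) (auto simp: fun_eq_iff)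
next
  case (Suc n)
  define S1 where "S1 = S(0 := S 0 - 1, B+10 := S (B+10) + S (B+3))"
  have a: "halts_with (copy_add (B+3) (B+10) (B+11)) (S(0 := S 0 - 1)) S1"
    by (rule halts_with_eq[OF copy_add_halts]) (use Suc.hyps(2)[symmetric] Suc.prems in \<open>auto simp: fun_eq_iff S1_def\<close>)
  have b: "halts_with (mult_loop B) S1 (S1(0 := 0, B+10 := S1 (B+10) + S1 (B+3) * S1 0))"
    by (rule Suc.hyps(1)) (use Suc.hyps(2)[symmetric] Suc.prems in \<open>simp_all add: S1_def\<close>)
  have c: "S1(0 := 0, B+10 := S1 (B+10) + S1 (B+3) * S1 0) = S(0 := 0, B+10 := S (B+10) + S (B+3) * S 0)"
    using Suc.hyps(2)[symmetric] Suc.prems by (auto simp: fun_eq_iff S1_def algebra_simps)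
  show ?case unfolding mult_loop_def
    by (rule whl_step_halts[OF a b[unfolded c mult_loop_def]]) (use Suc.hyps(2)[symmetric] in auto)
qed

lemma prod_decode_Suc: "prod_decode (Suc X) =
  (if snd (prod_decode X) = 0 then (0, Suc (fst (prod_decode X))) else (Suc (fst (prod_decode X)), snd (prod_decode X) - 1))"
proof -
  obtain a b where ab: "prod_decode X = (a, b)" by fastforce
  have X: "X = triangle (a + b) + a" using prod_decode_inverse[of X] ab by (simp add: prod_encode_def)
  show ?thesis
  proof (cases b)
    case 0
    have "Suc X = prod_encode (0, Suc a)" using X 0 by (simp add: prod_encode_def)
    then show ?thesis using ab 0 by (metis fst_conv prod_encode_inverse snd_conv)
  next
    case (Suc c)
    have "Suc X = prod_encode (Suc a, c)" using X Suc by (simp add: prod_encode_def)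
    then show ?thesis using ab Suc by (metis fst_conv prod_encode_inverse snd_conv diff_Suc_1 nat.distinct(1))
  qed
qed

definition decode_loop :: "instr list" where
  "decode_loop = whl 3 (ifz 2 (move 1 2 ;; [Inc 2 1]) [Inc 1 1])"

lemma decode_loop_halts: "S 1 = fst (prod_decode X) \<Longrightarrow> S 2 = snd (prod_decode X) \<Longrightarrow>
  halts_with decode_loop S (S(3 := 0, 1 := fst (prod_decode (X + S 3)), 2 := snd (prod_decode (X + S 3))))"
proof (induction "S 3" arbitrary: S X)
  case 0 then show ?case unfolding decode_loop_def by (intro halts_with_eq[OF whl_zero_halts]) (auto simp: fun_eq_iff)
next
  case (Suc n)
  define S1 where "S1 = S(3 := n, 1 := fst (prod_decode (Suc X)), 2 := snd (prod_decode (Suc X)))"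
  have a: "halts_with (ifz 2 (move 1 2 ;; [Inc 2 1]) [Inc 1 1]) (S(3 := S 3 - 1)) S1"
  proof (cases "S 2 = 0")
    case True
    show ?thesis
      by (rule ifz_zero_halts, simp add: True, simp, rule seq_halts[OF move_halts halts_with_eq[OF inc_halts]])
         (use True Suc.prems Suc.hyps(2)[symmetric] in \<open>auto simp: fun_eq_iff S1_def prod_decode_Suc\<close>)
  next
    case False
    show ?thesis
      by (rule ifz_nonzero_halts, simp add: False, simp, rule halts_with_eq[OF inc_halts])
         (use False Suc.prems Suc.hyps(2)[symmetric] in \<open>auto simp: fun_eq_iff S1_def prod_decode_Suc\<close>)
  qed
  have b: "halts_with decode_loop S1 (S1(3 := 0, 1 := fst (prod_decode (Suc X + S1 3)), 2 := snd (prod_decode (Suc X + S1 3))))"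
    by (rule Suc.hyps(1)) (use Suc.hyps(2)[symmetric] in \<open>simp_all add: S1_def\<close>)
  have c: "S1(3 := 0, 1 := fst (prod_decode (Suc X + S1 3)), 2 := snd (prod_decode (Suc X + S1 3)))
     = S(3 := 0, 1 := fst (prod_decode (X + S 3)), 2 := snd (prod_decode (X + S 3)))"
    using Suc.hyps(2)[symmetric] by (auto simp: fun_eq_iff S1_def)
  show ?case unfolding decode_loop_def
    by (rule whl_step_halts[OF a b[unfolded c decode_loop_def]]) (use Suc.hyps(2)[symmetric] in auto)
qed

definition decode_fst :: "instr list" where
  "decode_fst = move 0 3 ;; decode_loop ;; move 1 0"

lemma decode_fst_halts: "\<exists>R'. halts_with decode_fst ((\<lambda>_. 0)(0 := x)) R' \<and> R' 0 = fst (prod_decode x)"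
proof -
  define S0 :: "nat \<Rightarrow> nat" where "S0 = (\<lambda>_. 0)(0 := x)"
  define S1 where "S1 = S0(0 := 0, 3 := x)"
  define S2 where "S2 = S1(3 := 0, 1 := fst (prod_decode (0 + S1 3)), 2 := snd (prod_decode (0 + S1 3)))"
  have a: "halts_with (move 0 3) S0 S1" by (rule halts_with_eq[OF move_halts]) (auto simp: fun_eq_iff S0_def S1_def)
  have b: "halts_with decode_loop S1 S2" unfolding S2_def by (rule decode_loop_halts) (simp_all add: S1_def S0_def prod_decode_def prod_decode_aux.simps)
  have c: "halts_with (move 1 0) S2 (S2(1 := 0, 0 := S2 0 + S2 1))" by (rule move_halts) simp
  show ?thesis unfolding decode_fst_def S0_def[symmetric]
    by (rule exI, rule conjI, rule seq_halts[OF a seq_halts[OF b c]]) (simp add: S2_def S1_def)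
qed

definition cm_fun :: "instr list \<Rightarrow> nat \<Rightarrow> nat option" where
  "cm_fun P x = (if \<exists>n. fst (exec P n (0, (\<lambda>_. 0)(0 := x))) \<ge> length P
     then Some (snd (exec P (LEAST n. fst (exec P n (0, (\<lambda>_. 0)(0 := x))) \<ge> length P) (0, (\<lambda>_. 0)(0 := x))) 0)
     else None)"

lemma cm_fun_computes: "cm_computes P (cm_fun P)"
  unfolding cm_computes_def
proof (intro allI iffI)
  fix x y
  let ?s = "(0::nat, (\<lambda>_. 0::nat)(0 := x))"
  assume "cm_fun P x = Some y"
  then obtain n0 where "fst (exec P n0 ?s) \<ge> length P" by (auto simp: cm_fun_def split: if_splits)
  then show "\<exists>n. length P \<le> fst ((cm_step P ^^ n) ?s) \<and> snd ((cm_step P ^^ n) ?s) 0 = y"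
    using \<open>cm_fun P x = Some y\<close> LeastI[where P="\<lambda>n. fst (exec P n ?s) \<ge> length P"]
    by (auto simp: cm_fun_def exec_def split: if_splits)
next
  fix x y
  let ?s = "(0::nat, (\<lambda>_. 0::nat)(0 := x))"
  assume "\<exists>n. length P \<le> fst ((cm_step P ^^ n) ?s) \<and> snd ((cm_step P ^^ n) ?s) 0 = y"
  then obtain n where n: "fst (exec P n ?s) \<ge> length P" "snd (exec P n ?s) 0 = y"
    by (auto simp: exec_def)
  define n0 where "n0 = (LEAST n. fst (exec P n ?s) \<ge> length P)"
  have "fst (exec P n0 ?s) \<ge> length P" unfolding n0_def by (rule LeastI[of _ n]) (rule n(1))
  then have "exec P n0 ?s = exec P n ?s" using n(1) by (rule exec_halted_unique)
  then show "cm_fun P x = Some y" using n unfolding cm_fun_def n0_def[symmetric] by auto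
qed

lemma cm_fun_halts: "halts_with P ((\<lambda>_. 0)(0 := x)) R' \<Longrightarrow> cm_fun P x = Some (R' 0)"
proof -
  assume "halts_with P ((\<lambda>_. 0)(0 := x)) R'"
  then obtain n where n: "fst (exec P n (0, (\<lambda>_. 0)(0 := x))) \<ge> length P"
      "snd (exec P n (0, (\<lambda>_. 0)(0 := x))) = R'" unfolding halts_with_def by blast
  then have "\<exists>n. length P \<le> fst ((cm_step P ^^ n) (0, (\<lambda>_. 0)(0 := x))) \<and> snd ((cm_step P ^^ n) (0, (\<lambda>_. 0)(0 := x))) 0 = R' 0"
    by (auto simp: exec_def)
  then show ?thesis using cm_fun_computes[of P] unfolding cm_computes_def by blast
qed

definition regs_of :: "instr list \<Rightarrow> nat set" where
  "regs_of P = (\<lambda>i. case i of Inc r j \<Rightarrow> r | Dec r j k \<Rightarrow> r) ` set P"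

definition reg_bound :: "instr list \<Rightarrow> nat" where
  "reg_bound P = Suc (Max (insert 0 (regs_of P)))"

lemma reg_bound: "r \<in> regs_of P \<Longrightarrow> r < reg_bound P" "0 < reg_bound P"
proof -
  have "finite (insert 0 (regs_of P))" by (simp add: regs_of_def)
  then show "r \<in> regs_of P \<Longrightarrow> r < reg_bound P" unfolding reg_bound_def
    by (simp add: le_imp_less_Suc)
  show "0 < reg_bound P" by (simp add: reg_bound_def)
qed

lemma frame_step:
  assumes "\<forall>r\<in>regs_of P. r < B" "\<forall>r<B. R r = R' r"
  shows "cm_step P (pc, R') = (fst (cm_step P (pc, R)), \<lambda>r. if r < B then snd (cm_step P (pc, R)) r else R' r)"
proof (cases "pc < length P")
  case True
  have ri: "(case P ! pc of Inc r j \<Rightarrow> r | Dec r j k \<Rightarrow> r) < B"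
    using assms(1) True unfolding regs_of_def by auto
  show ?thesis using True ri assms(2)
    by (cases "P ! pc") (auto simp: fun_eq_iff)
next
  case False then show ?thesis using assms(2) by (auto simp: fun_eq_iff)
qed

lemma frame_exec:
  assumes "\<forall>r\<in>regs_of P. r < B"
  shows "\<forall>r<B. R r = R' r \<Longrightarrow> exec P n (pc, R') = (fst (exec P n (pc, R)), \<lambda>r. if r < B then snd (exec P n (pc, R)) r else R' r)"
proof (induction n)
  case 0 then show ?case by (auto simp: fun_eq_iff)
next
  case (Suc n)
  obtain pc1 R1 where e: "exec P n (pc, R) = (pc1, R1)" by fastforce
  have agr: "\<forall>r<B. R1 r = (\<lambda>r. if r < B then R1 r else R' r) r" by simp
  have IH: "exec P n (pc, R') = (pc1, \<lambda>r. if r < B then R1 r else R' r)" using Suc.IH[OF Suc.prems] unfolding e snd_conv fst_conv by assumption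
  have fs: "cm_step P (pc1, \<lambda>r. if r < B then R1 r else R' r) = (fst (cm_step P (pc1, R1)), \<lambda>r. if r < B then snd (cm_step P (pc1, R1)) r else (if r < B then R1 r else R' r))"
    by (rule frame_step[OF assms agr])
  show ?case unfolding exec_Suc IH e fs by (auto simp: fun_eq_iff)
qed

lemma bin_enc_append: "bin_enc (u @ v) = bin_enc u + 2 ^ length u * bin_enc v"
  by (induction u) (auto simp: algebra_simps)

fun bin_dec :: "nat \<Rightarrow> bool list" where
  "bin_dec 0 = []"
| "bin_dec (Suc n) = (if even n then False # bin_dec (n div 2) else True # bin_dec (n div 2))"

lemma bin_enc_dec: "bin_enc (bin_dec n) = n"
  by (induction n rule: bin_dec.induct) auto

lemma bin_dec_enc: "bin_dec (bin_enc x) = x"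
proof (induction x)
  case (Cons c x)
  have "bin_enc (c # x) = (if c then Suc (Suc (2 * bin_enc x)) else Suc (2 * bin_enc x))" by simp
  then show ?case using Cons by (cases c) (simp_all only: bin_dec.simps, auto)
qed simp

section \<open>A machine that prefixes its output with its input\<close>

text \<open>The input \<open>len_header k |w| @ w @ p\<close> is stored in register 0. Registers below \<open>B\<close> belong to the
  simulated program for \<open>V\<close>; \<open>parse_input\<close> uses \<open>B, \<dots>, B+11\<close> as scratch and leaves the pair
  \<open>(p, w)\<close> in register 0, \<open>w\<close> in \<open>B+2\<close> and \<open>2\<^sup>|\<^sup>w\<^sup>|\<close> in \<open>B+3\<close>; \<open>append_output\<close> then turns an output
  \<open>v\<close> into \<open>w + 2\<^sup>|\<^sup>w\<^sup>| v\<close>, the code of \<open>w @ v\<close>.\<close>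

definition parse_input :: "nat \<Rightarrow> nat \<Rightarrow> instr list" where
  "parse_input k B = move 0 B ;; read_unary k B ;; read_unary 1 B ;; [Inc (B+3) 1] ;; read_bits B ;; copy_add (B+2) (B+8) (B+7) ;;
     move2 B (B+8) (B+9) ;; add_triangle B ;; move (B+9) 0"

definition append_output :: "nat \<Rightarrow> instr list" where
  "append_output B = move (B+2) (B+10) ;; mult_loop B ;; move (B+10) 0"

text \<open>A self-delimiting code of \<open>n\<close> of length about \<open>n / k\<close>.\<close>

definition len_header :: "nat \<Rightarrow> nat \<Rightarrow> bool list" where
  "len_header k n = replicate (n div k) True @ False # replicate (n mod k) True @ [False]"

lemma length_len_header: "length (len_header k n) = n div k + n mod k + 2"
  by (simp add: len_header_def)

lemma parse_input_halts:
  assumes B: "0 < B" and q: "q = replicate j True @ False # replicate r True @ False # w @ p"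
    and m: "k * j + r = length w"
  shows "\<exists>S. halts_with (parse_input k B) ((\<lambda>_. 0)(0 := bin_enc q)) S \<and>
     S 0 = prod_encode (bin_enc p, bin_enc w) \<and> S (B+2) = bin_enc w \<and> S (B+3) = 2 ^ length w \<and>
     (\<forall>x. 0 < x \<and> x < B \<longrightarrow> S x = 0) \<and> S (B+10) = 0 \<and> S (B+11) = 0"
proof -
  define S0 :: "nat \<Rightarrow> nat" where "S0 = (\<lambda>_. 0)(0 := bin_enc q)"
  define S1 where "S1 = S0(0 := 0, B := bin_enc q)"
  define S2 where "S2 = S1(B := bin_enc (replicate r True @ False # w @ p), B+1 := S1 (B+1) + k * j)"
  define S3 where "S3 = S2(B := bin_enc (w @ p), B+1 := S2 (B+1) + 1 * r)"
  define S4 where "S4 = S3(B+3 := Suc (S3 (B+3)))"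
  define S5 where "S5 = S4(B := bin_enc p, B+1 := 0, B+2 := S4 (B+2) + 2^0 * bin_enc w, B+3 := 2^(0 + length w))"
  define S6 where "S6 = S5(B+8 := S5 (B+8) + S5 (B+2))"
  define S7 where "S7 = S6(B := 0, B+8 := S6 (B+8) + S6 B, B+9 := S6 (B+9) + S6 B)"
  define S8 where "S8 = S7(B+8 := 0, B+9 := S7 (B+9) + triangle (S7 (B+8)))"
  define S9 where "S9 = S8(B+9 := 0, 0 := S8 0 + S8 (B+9))"
  have 1: "halts_with (move 0 B) S0 S1" by (rule halts_with_eq[OF move_halts]) (use B in \<open>auto simp: S0_def S1_def fun_eq_iff\<close>)
  have 2: "halts_with (read_unary k B) S1 S2" unfolding S2_def
    by (rule read_unary_halts) (use B q in \<open>simp_all add: S1_def S0_def\<close>)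
  have 3: "halts_with (read_unary 1 B) S2 S3" unfolding S3_def
    by (rule read_unary_halts) (use B in \<open>simp_all add: S2_def S1_def S0_def\<close>)
  have 4: "halts_with [Inc (B+3) 1] S3 S4" unfolding S4_def by (rule inc_halts)
  have 5: "halts_with (read_bits B) S4 S5" unfolding S5_def
    by (rule read_bits_halts) (use B m in \<open>simp_all add: S4_def S3_def S2_def S1_def S0_def\<close>)
  have 6: "halts_with (copy_add (B+2) (B+8) (B+7)) S5 S6" unfolding S6_def
    by (rule copy_add_halts) (use B in \<open>simp_all add: S5_def S4_def S3_def S2_def S1_def S0_def\<close>)
  have 7: "halts_with (move2 B (B+8) (B+9)) S6 S7" unfolding S7_def by (rule move2_halts) simp_all
  have 8: "halts_with (add_triangle B) S7 S8" unfolding S8_def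
    by (rule add_triangle_halts) (use B in \<open>simp add: S7_def S6_def S5_def S4_def S3_def S2_def S1_def S0_def\<close>)
  have 9: "halts_with (move (B+9) 0) S8 S9" unfolding S9_def by (rule move_halts) (use B in simp)
  have H: "halts_with (parse_input k B) S0 S9" unfolding parse_input_def
    by (rule seq_halts[OF 1 seq_halts[OF 2 seq_halts[OF 3 seq_halts[OF 4 seq_halts[OF 5 seq_halts[OF 6 seq_halts[OF 7 seq_halts[OF 8 9]]]]]]]])
  show ?thesis
    apply (rule exI[of _ S9])
    using H B by (simp add: S9_def S8_def S7_def S6_def S5_def S4_def S3_def S2_def S1_def S0_def prod_encode_def add.commute)
qed

definition prefix_prog :: "nat \<Rightarrow> instr list \<Rightarrow> instr list" where
  "prefix_prog k PV = parse_input k (reg_bound PV) ;; PV ;; append_output (reg_bound PV)"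

lemma prefix_prog_output:
  assumes PV: "cm_computes PV fV"
    and fv: "fV (prod_encode (bin_enc p, bin_enc w)) = Some (bin_enc v)"
    and k: "0 < k"
  shows "cm_fun (prefix_prog k PV) (bin_enc (len_header k (length w) @ w @ p)) = Some (bin_enc (w @ v))"
proof -
  define B where "B = reg_bound PV"
  have B0: "0 < B" unfolding B_def by (rule reg_bound(2))
  have regs: "\<forall>r\<in>regs_of PV. r < B" unfolding B_def using reg_bound(1) by blast
  have qeq: "len_header k (length w) @ w @ p = replicate (length w div k) True @ False # replicate (length w mod k) True @ False # w @ p"
    by (simp add: len_header_def)
  obtain S where S: "halts_with (parse_input k B) ((\<lambda>_. 0)(0 := bin_enc (len_header k (length w) @ w @ p))) S"
    "S 0 = prod_encode (bin_enc p, bin_enc w)" "S (B+2) = bin_enc w" "S (B+3) = 2 ^ length w"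
    "\<forall>x. 0 < x \<and> x < B \<longrightarrow> S x = 0" "S (B+10) = 0" "S (B+11) = 0"
    using parse_input_halts[OF B0 qeq, of k] by auto
  define M where "M = prod_encode (bin_enc p, bin_enc w)"
  obtain n where n: "length PV \<le> fst (exec PV n (0, (\<lambda>_. 0)(0 := M)))"
      "snd (exec PV n (0, (\<lambda>_. 0)(0 := M))) 0 = bin_enc v"
    using PV fv unfolding cm_computes_def M_def exec_def by blast
  have agree: "\<forall>r<B. ((\<lambda>_. 0)(0 := M)) r = S r" using S(2,5) unfolding M_def by auto
  define S2 where "S2 = (\<lambda>r. if r < B then snd (exec PV n (0, (\<lambda>_. 0)(0 := M))) r else S r)"
  have fe: "exec PV n (0, S) = (fst (exec PV n (0, (\<lambda>_. 0)(0 := M))), S2)"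
    unfolding S2_def by (rule frame_exec[OF regs agree])
  have hv: "halts_with PV S S2" unfolding halts_with_def using fe n(1) by (intro exI[of _ n]) simp
  have S2: "S2 0 = bin_enc v" "S2 (B+2) = bin_enc w" "S2 (B+3) = 2 ^ length w" "S2 (B+10) = 0" "S2 (B+11) = 0"
    using n(2) B0 S by (auto simp: S2_def)
  define T1 where "T1 = S2(B+2 := 0, B+10 := S2 (B+10) + S2 (B+2))"
  define T2 where "T2 = T1(0 := 0, B+10 := T1 (B+10) + T1 (B+3) * T1 0)"
  define T3 where "T3 = T2(B+10 := 0, 0 := T2 0 + T2 (B+10))"
  have p1: "halts_with (move (B+2) (B+10)) S2 T1" unfolding T1_def by (rule move_halts) simp
  have p2: "halts_with (mult_loop B) T1 T2" unfolding T2_def by (rule mult_loop_halts[OF B0]) (use S2 in \<open>simp add: T1_def\<close>)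
  have p3: "halts_with (move (B+10) 0) T2 T3" unfolding T3_def by (rule move_halts) (use B0 in simp)
  have H: "halts_with (prefix_prog k PV) ((\<lambda>_. 0)(0 := bin_enc (len_header k (length w) @ w @ p))) T3"
    unfolding prefix_prog_def append_output_def B_def[symmetric]
    by (rule seq_halts[OF S(1) seq_halts[OF hv seq_halts[OF p1 seq_halts[OF p2 p3]]]])
  have "T3 0 = bin_enc (w @ v)"
    using S2 B0 by (simp add: T3_def T2_def T1_def bin_enc_append)
  then show ?thesis using cm_fun_halts[OF H] by simp
qed

section \<open>Complexity bounds from explicit machines\<close>

lemma KC_le_machine:
  assumes "optimal_machine U" "computable_machine D"
  obtains c where "\<And>p u. D p = Some u \<Longrightarrow> KC U u \<le> length p + c"
proof -
  obtain c where c: "\<forall>p u. D p = Some u \<longrightarrow> (\<exists>q. U q = Some u \<and> length q \<le> length p + c)"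
    using assms unfolding optimal_machine_def by blast
  have "KC U u \<le> length p + c" if Dp: "D p = Some u" for p u
  proof -
    obtain q where q: "U q = Some u" "length q \<le> length p + c" using c Dp by blast
    have "KC U u \<le> length q" unfolding KC_def by (rule Least_le) (use q in blast)
    with q show ?thesis by simp
  qed
  then show thesis by (rule that)
qed

lemma computable_machine_Some: "computable_machine Some"
proof -
  have "halts_with [] ((\<lambda>_. 0)(0 := y)) ((\<lambda>_. 0)(0 := y))" for y
    by (rule halts_with_intro[of _ 0]) simp
  then have "cm_fun [] = Some" using cm_fun_halts by fastforce
  then show ?thesis
    unfolding computable_machine_def partial_computable_def using cm_fun_computes[of "[]"] by auto
qed

lemma KC_le_length:
  assumes "optimal_machine U"
  obtains c where "\<And>u. KC U u \<le> length u + c"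
  using KC_le_machine[OF assms computable_machine_Some] by auto

lemma computable_cond_machine_program: "computable_cond_machine (\<lambda>p v. Some p)"
  unfolding computable_cond_machine_def partial_computable_def
proof (intro exI conjI allI)
  show "cm_computes decode_fst (cm_fun decode_fst)" by (rule cm_fun_computes)
  fix p v
  obtain R' where R': "halts_with decode_fst ((\<lambda>_. 0)(0 := prod_encode (bin_enc p, bin_enc v))) R'"
    "R' 0 = fst (prod_decode (prod_encode (bin_enc p, bin_enc v)))" using decode_fst_halts by blast
  show "map_option bin_enc (Some p) = cm_fun decode_fst (prod_encode (bin_enc p, bin_enc v))"
    using cm_fun_halts[OF R'(1)] R'(2) by simp
qed

lemma KC_cond_attained:
  assumes "optimal_cond_machine V"
  shows "\<exists>p. V p v = Some u \<and> length p = KC_cond V u v"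
proof -
  have "\<exists>n p. length p = n \<and> V p v = Some u"
    using assms computable_cond_machine_program unfolding optimal_cond_machine_def by blast
  from LeastI_ex[OF this] show ?thesis unfolding KC_cond_def by blast
qed

lemma KC_append_le:
  assumes U: "optimal_machine U" and V: "optimal_cond_machine V" and "0 < k"
  obtains c where
    "\<And>w v. KC U (w @ v) \<le> length w div k + length w mod k + 2 + length w + KC_cond V v w + c"
proof -
  obtain fV where fV: "partial_computable fV"
      "\<And>p v. map_option bin_enc (V p v) = fV (prod_encode (bin_enc p, bin_enc v))"
    using V unfolding optimal_cond_machine_def computable_cond_machine_def by blast
  obtain PV where PV: "cm_computes PV fV" using fV(1) unfolding partial_computable_def by blast
  define D where "D q = map_option bin_dec (cm_fun (prefix_prog k PV) (bin_enc q))" for q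
  have "computable_machine D"
    unfolding computable_machine_def partial_computable_def
  proof (intro exI conjI allI)
    show "cm_computes (prefix_prog k PV) (cm_fun (prefix_prog k PV))" by (rule cm_fun_computes)
    show "map_option bin_enc (D q) = cm_fun (prefix_prog k PV) (bin_enc q)" for q
      unfolding D_def option.map_comp by (simp add: o_def bin_enc_dec option.map_ident)
  qed
  then obtain c where c: "\<And>p u. D p = Some u \<Longrightarrow> KC U u \<le> length p + c"
    using KC_le_machine[OF U] by blast
  have "KC U (w @ v) \<le> length w div k + length w mod k + 2 + length w + KC_cond V v w + c" for w v
  proof -
    obtain p where p: "V p w = Some v" "length p = KC_cond V v w"
      using KC_cond_attained[OF V] by blast
    have "fV (prod_encode (bin_enc p, bin_enc w)) = Some (bin_enc v)" using fV(2)[of p w] p(1) by simp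
    then have "D (len_header k (length w) @ w @ p) = Some (w @ v)"
      unfolding D_def using prefix_prog_output[OF PV _ assms(3)] by (simp add: bin_dec_enc)
    from c[OF this] p(2) show ?thesis by (simp add: length_len_header)
  qed
  then show thesis by (rule that)
qed

lemma length_seg: "length (seg x n1 n2) = Suc n2 - n1"
  by (simp add: seg_def del: upt_Suc)

lemma seg_append: "T \<le> T' \<Longrightarrow> seg x 1 T @ seg x (T + 1) T' = seg x 1 T'"
  using upt_add_eq_append[of 1 "Suc T" "T' - T"] by (simp add: seg_def)

lemma randomness_rate_le_one:
  assumes "optimal_machine U" "randomness_rate U x \<tau>"
  shows "\<tau> \<le> 1"
proof (rule ccontr)
  assume "\<not> \<tau> \<le> 1"
  obtain c where c: "\<And>u. KC U u \<le> length u + c" using KC_le_length[OF assms(1)] by blast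
  obtain n0 where n0: "\<And>n. n0 \<le> n \<Longrightarrow> \<tau> * real n \<le> real (KC U (seg x 1 n))"
    using assms(2) unfolding randomness_rate_def eventually_sequentially by blast
  define n where "n = max n0 (nat \<lceil>real c / (\<tau> - 1)\<rceil> + 1)"
  have "\<tau> * real n \<le> real n + real c"
    using n0[of n] c[of "seg x 1 n"] by (simp add: n_def length_seg)
  moreover have "real c < (\<tau> - 1) * real n"
  proof -
    have "real c / (\<tau> - 1) < real n" unfolding n_def by linarith
    with \<open>\<not> \<tau> \<le> 1\<close> show ?thesis by (simp add: field_simps)
  qed
  ultimately show False by (simp add: algebra_simps)
qed

lemma tb_Suc_Suc: "tb a b (Suc (Suc m)) = (b + 1) ^ m * b * a"
proof (induction m)
  case (Suc m)
  have "tb a b (Suc (Suc (Suc m))) = b * ((\<Sum>j\<in>{1..Suc m}. tb a b j) + tb a b (Suc (Suc m)))"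
    by (simp add: sum.cl_ivl_Suc)
  also have "\<dots> = tb a b (Suc (Suc m)) + b * tb a b (Suc (Suc m))"
    by (simp add: algebra_simps)
  finally show ?case using Suc by (simp add: algebra_simps)
qed simp

lemma tb_Suc_ge: "1 \<le> b \<Longrightarrow> a \<le> tb a b (Suc m)"
  by (cases m) (simp_all add: tb_Suc_Suc del: tb.simps(3))

lemma tb_Suc_Suc_ge: "b * tb a b (Suc m) \<le> tb a b (Suc (Suc m))"
proof (cases m)
  case (Suc m')
  have "b * ((b + 1) ^ m' * b * a) \<le> (b + 1) ^ Suc m' * b * a" by (simp add: algebra_simps)
  then show ?thesis using Suc by (simp only: tb_Suc_Suc)
qed (simp add: tb_Suc_Suc)

lemma affine_in_bigtheta:
  fixes f :: "nat \<Rightarrow> real"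
  assumes L: "L > 0" and C: "C \<ge> 0" and f: "\<And>i. d \<le> i \<Longrightarrow> f i = (real i - real d) * L + C"
  shows "f \<in> \<Theta>(\<lambda>i. real i)"
proof (rule bigthetaI'[of "L/2" "L + C"])
  show "L/2 > 0" "L + C > 0" using L C by auto
  show "\<forall>\<^sub>F i in at_top. L / 2 * norm (real i) \<le> norm (f i) \<and> norm (f i) \<le> (L + C) * norm (real i)"
    unfolding eventually_at_top_linorder
  proof (intro exI[of _ "2 * d + 1"] allI impI)
    fix i :: nat assume i: "2 * d + 1 \<le> i"
    have fi: "f i = (real i - real d) * L + C" using f i by auto
    have "real i / 2 * L \<le> (real i - real d) * L" using i L by (intro mult_right_mono) auto
    moreover have "(real i - real d) * L \<le> real i * L" using L by (simp add: mult_right_mono)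
    moreover have "C \<le> C * real i" using C i by (simp add: mult_le_cancel_left1)
    ultimately show "L / 2 * norm (real i) \<le> norm (f i) \<and> norm (f i) \<le> (L + C) * norm (real i)"
      using fi C by (simp add: algebra_simps)
  qed
qed

lemma log_power_mult:
  assumes "1 \<le> y"
  shows "log 2 (real ((b + 1) ^ m * y)) = real m * log 2 (real b + 1) + log 2 (real y)"
proof -
  have "log 2 ((real b + 1) ^ m * real y) = log 2 ((real b + 1) ^ m) + log 2 (real y)"
    using assms by (intro log_mult_pos) auto
  then show ?thesis by (simp add: log_nat_power add.commute)
qed

lemma log_length_block_bigtheta:
  assumes "0 < a" "1 \<le> b"
  shows "(\<lambda>i. log 2 (real (length (seg x (tb a b (i - 1) + 1) (tb a b i))))) \<in> \<Theta>(\<lambda>i. real i)"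
proof (rule affine_in_bigtheta[of "log 2 (real b + 1)" "log 2 (real (b * b * a))" 3])
  have "1 \<le> b * b * a" using assms by (simp add: Suc_le_eq)
  then have "1 \<le> real (b * b * a)" by linarith
  then show "0 \<le> log 2 (real (b * b * a))" by simp
  fix i :: nat assume "3 \<le> i"
  define m where "m = i - 3"
  have i: "i = Suc (Suc (Suc m))" using \<open>3 \<le> i\<close> by (simp add: m_def)
  have "length (seg x (tb a b (i - 1) + 1) (tb a b i)) = (b + 1) ^ m * (b * b * a)"
    by (simp add: i length_seg tb_Suc_Suc algebra_simps del: tb.simps(3))
  then show "log 2 (real (length (seg x (tb a b (i - 1) + 1) (tb a b i)))) =
      (real i - real 3) * log 2 (real b + 1) + log 2 (real (b * b * a))"
    using log_power_mult[OF \<open>1 \<le> b * b * a\<close>, of b m] i by simp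
qed (use assms in simp)

lemma log_length_prefix_bigtheta:
  assumes "0 < a" "1 \<le> b"
  shows "(\<lambda>i. log 2 (real (length (seg x 1 (tb a b i))))) \<in> \<Theta>(\<lambda>i. real i)"
proof (rule affine_in_bigtheta[of "log 2 (real b + 1)" "log 2 (real (b * a))" 2])
  have "1 \<le> b * a" using assms by (simp add: Suc_le_eq)
  then have "1 \<le> real (b * a)" by linarith
  then show "0 \<le> log 2 (real (b * a))" by simp
  fix i :: nat assume "2 \<le> i"
  define m where "m = i - 2"
  have i: "i = Suc (Suc m)" using \<open>2 \<le> i\<close> by (simp add: m_def)
  have "length (seg x 1 (tb a b i)) = (b + 1) ^ m * (b * a)"
    by (simp add: i length_seg tb_Suc_Suc algebra_simps del: tb.simps(3))
  then show "log 2 (real (length (seg x 1 (tb a b i)))) =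
      (real i - real 2) * log 2 (real b + 1) + log 2 (real (b * a))"
    using log_power_mult[OF \<open>1 \<le> b * a\<close>, of b m] i by simp
qed (use assms in simp)

section \<open>Conditional complexity of the blocks\<close>

lemma block_growth_forces_complexity:
  fixes t t' h P b \<tau> \<sigma> \<sigma>' :: real
  assumes "0 \<le> t" "1 \<le> b" "b * t \<le> t'" "1 - \<sigma> \<le> b * \<sigma>'" "0 \<le> \<sigma>'" "\<sigma> + \<sigma>' < \<tau>"
    and chain: "\<tau> * t' \<le> t + h + P" and overhead: "h < (\<tau> - \<sigma> - \<sigma>') * t"
  shows "\<sigma> * (t' - t) < P"
proof (rule ccontr)
  assume "\<not> \<sigma> * (t' - t) < P"
  with chain have "(\<tau> - \<sigma>) * t' \<le> (1 - \<sigma>) * t + h" by (simp add: algebra_simps)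
  moreover have "(\<tau> - \<sigma>) * (b * t) \<le> (\<tau> - \<sigma>) * t'"
    using assms by (intro mult_left_mono) auto
  moreover have "(\<tau> - \<sigma>) * (b * t) = \<sigma>' * (b * t) + (\<tau> - \<sigma> - \<sigma>') * (b * t)"
    by (simp add: algebra_simps)
  moreover have "(1 - \<sigma>) * t \<le> \<sigma>' * (b * t)"
    using mult_right_mono[OF assms(4,1)] by (simp add: algebra_simps)
  moreover have "(\<tau> - \<sigma> - \<sigma>') * t \<le> (\<tau> - \<sigma> - \<sigma>') * (b * t)"
    using mult_right_mono[OF assms(2,1)] assms(6) by (intro mult_left_mono) auto
  ultimately show False using overhead by linarith
qed

lemma block_complexity_eventually_large:
  assumes U: "optimal_machine U" and V: "optimal_cond_machine V" and rate: "randomness_rate U x \<tau>"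
    and "0 \<le> \<sigma>'" "\<sigma> + \<sigma>' < \<tau>" and b: "1 \<le> b" "1 - \<sigma> \<le> real b * \<sigma>'"
  shows "\<exists>a0. \<forall>a\<ge>a0. \<forall>i\<ge>2. \<sigma> * real (tb a b i - tb a b (i - 1))
           < real (KC_cond V (seg x (tb a b (i - 1) + 1) (tb a b i)) (seg x 1 (tb a b (i - 1))))"
proof -
  define \<epsilon> where "\<epsilon> = \<tau> - \<sigma> - \<sigma>'"
  have "0 < \<epsilon>" using \<open>\<sigma> + \<sigma>' < \<tau>\<close> by (simp add: \<epsilon>_def)
  define k where "k = nat \<lceil>2 / \<epsilon>\<rceil> + 1"
  have "0 < k" by (simp add: k_def)
  have "2 / \<epsilon> \<le> real k" unfolding k_def by linarith
  then have k: "2 \<le> \<epsilon> * real k" using \<open>0 < \<epsilon>\<close> by (simp add: field_simps)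
  obtain c where c:
      "\<And>w v. KC U (w @ v) \<le> length w div k + length w mod k + 2 + length w + KC_cond V v w + c"
    using KC_append_le[OF U V \<open>0 < k\<close>] by blast
  obtain n0 where n0: "\<And>n. n0 \<le> n \<Longrightarrow> \<tau> * real n \<le> real (KC U (seg x 1 n))"
    using rate unfolding randomness_rate_def eventually_sequentially by blast
  define a0 where "a0 = n0 + nat \<lceil>2 * (real k + 2 + real c) / \<epsilon>\<rceil> + 1"
  have block: "\<sigma> * real (T' - T) < real (KC_cond V (seg x (T + 1) T') (seg x 1 T))"
    if "a0 \<le> T" "b * T \<le> T'" for T T'
  proof -
    have "T \<le> T'" using that b(1) by (metis dual_order.trans mult_le_mono1 mult_1)
    define h where "h = real (T div k) + real (T mod k) + 2 + real c"
    have "\<tau> * real T' \<le> real (KC U (seg x 1 T'))"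
      using n0 that \<open>T \<le> T'\<close> by (simp add: a0_def)
    also have "\<dots> \<le> real T + h + real (KC_cond V (seg x (T + 1) T') (seg x 1 T))"
      using c[of "seg x 1 T" "seg x (T + 1) T'", unfolded seg_append[OF \<open>T \<le> T'\<close>]]
      by (simp add: h_def length_seg)
    finally have chain: "\<tau> * real T' \<le> real T + h + real (KC_cond V (seg x (T + 1) T') (seg x 1 T))" .
    have "real (T div k) \<le> real T / real k" by (rule of_nat_div_le_of_nat)
    also have "\<dots> \<le> \<epsilon> * real T / 2"
      using mult_left_mono[OF k, of "real T"] \<open>0 < k\<close> by (simp add: field_simps)
    finally have "real (T div k) \<le> \<epsilon> * real T / 2" .
    moreover have "real (T mod k) \<le> real k" using mod_less_divisor[OF \<open>0 < k\<close>, of T] by simp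
    moreover have "real k + 2 + real c < \<epsilon> * real T / 2"
    proof -
      have "2 * (real k + 2 + real c) / \<epsilon> < real T" using that unfolding a0_def by linarith
      then show ?thesis using \<open>0 < \<epsilon>\<close> by (simp add: field_simps)
    qed
    ultimately have "h < \<epsilon> * real T" unfolding h_def by linarith
    then show ?thesis
      using block_growth_forces_complexity[OF _ _ _ b(2) \<open>0 \<le> \<sigma>'\<close> \<open>\<sigma> + \<sigma>' < \<tau>\<close> chain] that b(1) \<open>T \<le> T'\<close>
      unfolding \<epsilon>_def by (simp add: of_nat_diff flip: of_nat_mult)
  qed
  show ?thesis
  proof (intro exI[of _ a0] allI impI)
    fix a i :: nat assume "a0 \<le> a" "2 \<le> i"
    then obtain m where i: "i = Suc (Suc m)" by (metis add_2_eq_Suc le_Suc_ex)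
    show "\<sigma> * real (tb a b i - tb a b (i - 1))
           < real (KC_cond V (seg x (tb a b (i - 1) + 1) (tb a b i)) (seg x 1 (tb a b (i - 1))))"
      using block[of "tb a b (Suc m)" "tb a b (Suc (Suc m))"] tb_Suc_ge[OF b(1), of a m]
        tb_Suc_Suc_ge[of b a m] \<open>a0 \<le> a\<close> unfolding i by simp
  qed
qed

theorem lemma4p2:
  fixes U :: "bool list \<Rightarrow> bool list option"
    and V :: "bool list \<Rightarrow> bool list \<Rightarrow> bool list option"
    and x :: "nat \<Rightarrow> bool"
    and \<tau> \<sigma> \<sigma>' :: real
  assumes "optimal_machine U" and "optimal_cond_machine V"
    and "\<tau> > 0" and "randomness_rate U x \<tau>"
    and "0 < \<sigma>" and "\<sigma> < \<tau>"
    and "0 < \<sigma>'" and "\<sigma>' < \<tau> - \<sigma>"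
  shows "\<exists>a0::nat. \<forall>a::nat. a \<ge> a0 \<and> a > 0 \<longrightarrow>
    (let b = nat \<lceil>(1 - \<sigma>) / \<sigma>'\<rceil>;
         t = tb a b;
         xi = (\<lambda>i. seg x (t (i - 1) + 1) (t i));
         ni = (\<lambda>i. t i - t (i - 1));
         xbar = (\<lambda>i. seg x 1 (t i))
     in (\<forall>i\<ge>2. real (KC_cond V (xi i) (xbar (i - 1))) > \<sigma> * real (ni i))
        \<and> (\<lambda>i. log 2 (real (length (xi i)))) \<in> \<Theta>(\<lambda>i. real i)
        \<and> (\<lambda>i. log 2 (real (length (xbar i)))) \<in> \<Theta>(\<lambda>i. real i))"
proof -
  define b where "b = nat \<lceil>(1 - \<sigma>) / \<sigma>'\<rceil>"
  have "\<sigma> < 1" using randomness_rate_le_one[OF assms(1,4)] assms(6) by linarith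
  have "(1 - \<sigma>) / \<sigma>' \<le> real b" unfolding b_def by linarith
  then have b: "1 - \<sigma> \<le> real b * \<sigma>'" using assms(7) by (simp add: field_simps)
  with \<open>\<sigma> < 1\<close> have "1 \<le> b" by (cases "b = 0") auto
  obtain a0 where a0: "\<forall>a\<ge>a0. \<forall>i\<ge>2. \<sigma> * real (tb a b i - tb a b (i - 1))
      < real (KC_cond V (seg x (tb a b (i - 1) + 1) (tb a b i)) (seg x 1 (tb a b (i - 1))))"
    using block_complexity_eventually_large[OF assms(1,2,4) _ _ \<open>1 \<le> b\<close> b] assms(7,8) by auto
  show ?thesis
    unfolding Let_def b_def[symmetric]
    using a0 log_length_block_bigtheta[OF _ \<open>1 \<le> b\<close>] log_length_prefix_bigtheta[OF _ \<open>1 \<le> b\<close>] by blast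
qed

end
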